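(* Let $(x_i,y_i)_{i\in[n]}$ be i.i.d. pairs in $\mathbb R^d\times[-1,1]$, let $g(x)=\mathbb E[y\mid x]$, $z_i=y_i-g(x_i)$, and $\sigma^2=\mathbb E[\mathrm{Var}(y\mid x)]$. Let $\mathcal F$ be any class of functions $\mathbb R^d\to\mathbb R$ (such that the events below are measurable, e.g. $\mathcal F$ countable) and let $\epsilon>0$. Then \[ \mathbb P\Big(\exists f\in\mathcal F:\ \tfrac1n\sum_{i=1}^n (y_i-f(x_i))^2\le \sigma^2-\epsilon\Big)\le 2\exp\Big(-\frac{n\epsilon^2}{8^3}\Big)+\mathbb P\Big(\exists f\in\mathcal F:\ \tfrac1n\sum_{i=1}^n f(x_i)z_i\ge \tfrac{\epsilon}{4}\Big). \]
   Context: $g(x)=\mathbb E[y\mid x]$ is the regression function for the common joint distribution of $(x,y)$; $z_i$ is the noise part of the label $y_i$; $\sigma^2=\mathbb E[(y-g(x))^2]$ is the expected conditional variance of the output. *)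

theory Defs
  imports "HOL-Probability.Probability"
begin

definition regression_fun :: "('d::euclidean_space \<times> real) measure \<Rightarrow> ('d \<Rightarrow> real) \<Rightarrow> bool" where
  "regression_fun \<mu> g \<longleftrightarrow> g \<in> borel_measurable borel \<and>
     (AE p in \<mu>. g (fst p) = real_cond_exp \<mu> (vimage_algebra (space \<mu>) fst borel) snd p)"

text \<open>Expected conditional variance sigma^2 = E[(y - g(x))^2].\<close>
definition noise_var :: "('d::euclidean_space \<times> real) measure \<Rightarrow> ('d \<Rightarrow> real) \<Rightarrow> real" where
  "noise_var \<mu> g = (\<integral>p. (snd p - g (fst p))\<^sup>2 \<partial>\<mu>)"

end

theory Submission
  imports Defs
begin

text \<open>
  Write \<open>f\<close> for a function in \<open>\<F>\<close> and \<open>f\<^sub>i = f(x\<^sub>i)\<close>, \<open>g\<^sub>i = g(x\<^sub>i)\<close>.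
  Pointwise \<open>(y\<^sub>i - f\<^sub>i)\<^sup>2 = (y\<^sub>i\<^sup>2 - g\<^sub>i\<^sup>2) - 2 f\<^sub>i z\<^sub>i + (f\<^sub>i - g\<^sub>i)\<^sup>2\<close>, and the last
  term is nonnegative. Hence if \<open>f\<close> has empirical risk at most \<open>\<sigma>\<^sup>2 - \<epsilon>\<close> while its empirical
  correlation with the noise stays below \<open>\<epsilon>/4\<close>, the sample mean of \<open>y\<^sup>2 - g(x)\<^sup>2\<close>, which does
  not depend on \<open>f\<close>, falls \<open>\<epsilon>/2\<close> below its expectation \<open>\<sigma>\<^sup>2\<close>; the latter identity holds
  because \<open>g(x)\<close> is orthogonal to the noise \<open>y - g(x)\<close>. Since \<open>|y\<^sup>2 - g(x)\<^sup>2| \<le> 1\<close>,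
  Hoeffding's inequality bounds the probability of that deviation by \<open>exp(-n\<epsilon>\<^sup>2/8)\<close>.
\<close>

lemma sum_squared_residuals_decomposition:
  fixes y f g :: "'i \<Rightarrow> real"
  shows "(\<Sum>i\<in>I. (y i - f i)\<^sup>2)
    = (\<Sum>i\<in>I. (y i)\<^sup>2 - (g i)\<^sup>2) - 2 * (\<Sum>i\<in>I. f i * (y i - g i)) + (\<Sum>i\<in>I. (f i - g i)\<^sup>2)"
proof -
  have "(y i - f i)\<^sup>2 = ((y i)\<^sup>2 - (g i)\<^sup>2) - 2 * (f i * (y i - g i)) + (f i - g i)\<^sup>2" for i
    by (simp add: power2_eq_square algebra_simps)
  then show ?thesis
    by (simp add: sum.distrib sum_subtractf sum_distrib_left)
qed

lemma low_empirical_risk_dichotomy: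
  fixes x :: "nat \<Rightarrow> 'd" and y :: "nat \<Rightarrow> real" and f g :: "'d \<Rightarrow> real" and n :: nat
  assumes "n > 0"
    and risk: "(1 / real n) * (\<Sum>i<n. (y i - f (x i))\<^sup>2) \<le> \<sigma> - \<epsilon>"
  shows "(1 / real n) * (\<Sum>i<n. f (x i) * (y i - g (x i))) \<ge> \<epsilon> / 4
    \<or> (\<Sum>i<n. (y i)\<^sup>2 - (g (x i))\<^sup>2) \<le> real n * \<sigma> - real n * (\<epsilon> / 2)"
proof (cases "(1 / real n) * (\<Sum>i<n. f (x i) * (y i - g (x i))) \<ge> \<epsilon> / 4")
  case False
  then have "(\<Sum>i<n. f (x i) * (y i - g (x i))) < real n * \<epsilon> / 4"
    using \<open>n > 0\<close> by (simp add: field_simps)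
  moreover have "(\<Sum>i<n. (y i - f (x i))\<^sup>2) \<le> real n * (\<sigma> - \<epsilon>)"
    using risk \<open>n > 0\<close> by (simp add: field_simps)
  moreover have "(\<Sum>i<n. (f (x i) - g (x i))\<^sup>2) \<ge> 0"
    by (intro sum_nonneg) auto
  ultimately show ?thesis
    using sum_squared_residuals_decomposition[of y "\<lambda>i. f (x i)" "{..<n}" "\<lambda>i. g (x i)"]
    by (simp add: algebra_simps)
qed simp

lemma low_empirical_risk_event_subset:
  fixes X :: "nat \<Rightarrow> 'a \<Rightarrow> 'd" and Y :: "nat \<Rightarrow> 'a \<Rightarrow> real" and g :: "'d \<Rightarrow> real"
  shows "{\<omega> \<in> S. \<exists>f\<in>\<F>. (1 / real n) * (\<Sum>i<n. (Y i \<omega> - f (X i \<omega>))\<^sup>2) \<le> \<sigma> - \<epsilon>}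
    \<subseteq> {\<omega> \<in> S. \<exists>f\<in>\<F>. (1 / real n) * (\<Sum>i<n. f (X i \<omega>) * (Y i \<omega> - g (X i \<omega>))) \<ge> \<epsilon> / 4}
      \<union> {\<omega> \<in> S. (\<Sum>i<n. (Y i \<omega>)\<^sup>2 - (g (X i \<omega>))\<^sup>2) \<le> real n * \<sigma> - real n * (\<epsilon> / 2)}"
    (is "?A \<subseteq> ?B \<union> ?C")
proof (cases "n = 0")
  case False
  show ?thesis
  proof
    fix \<omega> assume "\<omega> \<in> ?A"
    then obtain f where "\<omega> \<in> S" "f \<in> \<F>"
      and "(1 / real n) * (\<Sum>i<n. (Y i \<omega> - f (X i \<omega>))\<^sup>2) \<le> \<sigma> - \<epsilon>"
      by blast
    with low_empirical_risk_dichotomy[of n "\<lambda>i. Y i \<omega>" f "\<lambda>i. X i \<omega>" _ _ g] False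
    show "\<omega> \<in> ?B \<union> ?C"
      by auto
  qed
qed auto

lemma (in prob_space) Hoeffding_lower_tail_iid:
  fixes Z :: "nat \<Rightarrow> 'a \<Rightarrow> 'b" and N \<nu> :: "'b measure" and h :: "'b \<Rightarrow> real"
  assumes indep: "indep_vars (\<lambda>_. N) Z {..<n}"
    and law: "\<And>i. i < n \<Longrightarrow> distr M N (Z i) = \<nu>"
    and h: "h \<in> borel_measurable N"
    and range: "AE z in \<nu>. h z \<in> {a..b}"
    and "a < b" "n > 0" "t \<ge> 0"
  shows "prob {\<omega> \<in> space M. (\<Sum>i<n. h (Z i \<omega>)) \<le> real n * (\<integral>z. h z \<partial>\<nu>) - real n * t}
    \<le> exp (- 2 * real n * t\<^sup>2 / (b - a)\<^sup>2)"
proof -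
  have Z: "Z i \<in> M \<rightarrow>\<^sub>M N" if "i < n" for i
    using indep that unfolding indep_vars_def by auto
  have expectation: "expectation (\<lambda>\<omega>. h (Z i \<omega>)) = (\<integral>z. h z \<partial>\<nu>)" if "i < n" for i
    using integral_distr[OF Z[OF that] h] law[OF that] by simp
  interpret Hoeffding_ineq M "{..<n}" "\<lambda>i \<omega>. h (Z i \<omega>)" "\<lambda>_. a" "\<lambda>_. b"
    "\<Sum>i<n. expectation (\<lambda>\<omega>. h (Z i \<omega>))"
  proof unfold_locales
    show "indep_vars (\<lambda>_. borel) (\<lambda>i \<omega>. h (Z i \<omega>)) {..<n}"
      using indep_vars_compose2[OF indep, of "\<lambda>_. h"] h by simp
    fix i assume "i \<in> {..<n}"
    then have "i < n" by simp
    have "AE z in distr M N (Z i). h z \<in> {a..b}"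
      unfolding law[OF \<open>i < n\<close>] by (rule range)
    from AE_distrD[OF Z[OF \<open>i < n\<close>] this] show "AE \<omega> in M. h (Z i \<omega>) \<in> {a..b}" .
  qed simp
  have pos: "(\<Sum>i\<in>{..<n}. (b - a)\<^sup>2) > 0"
    using \<open>a < b\<close> \<open>n > 0\<close> by simp
  have exponent: "-2 * (real n * t)\<^sup>2 / (\<Sum>i\<in>{..<n}. (b - a)\<^sup>2) = - 2 * real n * t\<^sup>2 / (b - a)\<^sup>2"
    using \<open>a < b\<close> \<open>n > 0\<close> by (simp add: power2_eq_square)
  from Hoeffding_ineq_le[OF _ pos, of "real n * t"] \<open>t \<ge> 0\<close> show ?thesis
    unfolding exponent by (simp add: expectation)
qed

lemma regression_fun_borel_measurable: "regression_fun \<mu> g \<Longrightarrow> g \<in> borel_measurable borel"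
  unfolding regression_fun_def by simp

context
  fixes \<mu> :: "('d::euclidean_space \<times> real) measure" and g :: "'d \<Rightarrow> real" and c :: real
  assumes prob: "prob_space \<mu>" and sets: "sets \<mu> = sets borel"
    and reg: "regression_fun \<mu> g" and bounded: "AE p in \<mu>. \<bar>snd p\<bar> \<le> c"
begin

interpretation prob_space \<mu> by (rule prob)

private abbreviation (input) "\<G> \<equiv> vimage_algebra (space \<mu>) fst (borel :: 'd measure)"

private lemma fst_measurable: "fst \<in> \<mu> \<rightarrow>\<^sub>M (borel :: 'd measure)"
  unfolding measurable_cong_sets[OF sets refl] borel_prod[symmetric] by measurable

private lemma snd_measurable: "snd \<in> borel_measurable \<mu>"
  unfolding measurable_cong_sets[OF sets refl] borel_prod[symmetric] by measurable

private lemma regression_measurable: "(\<lambda>p. g (fst p)) \<in> borel_measurable \<mu>"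
  by (rule measurable_compose[OF fst_measurable regression_fun_borel_measurable[OF reg]])

private lemma regression_AE_cond_exp: "AE p in \<mu>. g (fst p) = real_cond_exp \<mu> \<G> snd p"
  using reg unfolding regression_fun_def by auto

private lemma integrable_snd: "integrable \<mu> snd"
  using bounded snd_measurable by (intro integrable_const_bound[where B = c]) auto

interpretation finite_measure_subalgebra \<mu> \<G>
  by unfold_locales
    (auto simp: subalgebra_def sets_vimage_algebra
      intro!: sets.sigma_sets_subset measurable_sets[OF fst_measurable])

lemma regression_fun_AE_abs_le: "AE p in \<mu>. \<bar>g (fst p)\<bar> \<le> c"
proof -
  have "AE p in \<mu>. real_cond_exp \<mu> \<G> snd p \<le> c"
    using bounded by (intro real_cond_exp_le_c[OF integrable_snd]) auto
  moreover have "AE p in \<mu>. real_cond_exp \<mu> \<G> snd p \<ge> - c"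
    using bounded by (intro real_cond_exp_ge_c[OF integrable_snd]) auto
  ultimately show ?thesis
    using regression_AE_cond_exp by eventually_elim auto
qed

lemma AE_diff_squares_regression_in_interval:
  "AE p in \<mu>. (snd p)\<^sup>2 - (g (fst p))\<^sup>2 \<in> {- c\<^sup>2..c\<^sup>2}"
  using regression_fun_AE_abs_le bounded
proof eventually_elim
  case (elim p)
  then have "c \<ge> 0"
    by linarith
  with elim have "(g (fst p))\<^sup>2 \<le> c\<^sup>2" "(snd p)\<^sup>2 \<le> c\<^sup>2"
    by (simp_all add: abs_le_square_iff[symmetric])
  then show ?case
    using zero_le_power2[of "snd p"] zero_le_power2[of "g (fst p)"]
    unfolding atLeastAtMost_iff by linarith
qed

lemma noise_var_eq_integral_diff_squares:
  "noise_var \<mu> g = (\<integral>p. (snd p)\<^sup>2 - (g (fst p))\<^sup>2 \<partial>\<mu>)"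
proof -
  have integrable_product: "integrable \<mu> (\<lambda>p. u p * v p)"
    if "AE p in \<mu>. \<bar>u p\<bar> \<le> c" "AE p in \<mu>. \<bar>v p\<bar> \<le> c"
      "u \<in> borel_measurable \<mu>" "v \<in> borel_measurable \<mu>" for u v
  proof (rule integrable_const_bound[where B = "c * c"])
    show "AE p in \<mu>. norm (u p * v p) \<le> c * c"
      using that(1,2) by eventually_elim (auto simp: abs_mult intro: mult_mono)
  qed (use that in simp)
  note bounds = bounded regression_fun_AE_abs_le
  note measurable = snd_measurable regression_measurable
  have "(\<lambda>p. g (fst p)) \<in> borel_measurable \<G>"
    by (rule measurable_compose[OF measurable_vimage_algebra1 regression_fun_borel_measurable[OF reg]])
      auto
  then have "(\<integral>p. g (fst p) * snd p \<partial>\<mu>) = (\<integral>p. g (fst p) * real_cond_exp \<mu> \<G> snd p \<partial>\<mu>)"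
    using real_cond_exp_intg(2)[OF integrable_product[OF bounds(2,1) measurable(2,1)] _ snd_measurable]
    by simp
  also have "\<dots> = (\<integral>p. g (fst p) * g (fst p) \<partial>\<mu>)"
    by (rule integral_cong_AE) (use regression_AE_cond_exp regression_measurable in auto)
  finally have orthogonality: "(\<integral>p. g (fst p) * snd p \<partial>\<mu>) = (\<integral>p. g (fst p) * g (fst p) \<partial>\<mu>)" .
  note integrable = integrable_product[OF bounds(1,1) measurable(1,1)]
    integrable_product[OF bounds(2,2) measurable(2,2)] integrable_product[OF bounds(2,1) measurable(2,1)]
  have "noise_var \<mu> g = (\<integral>p. snd p * snd p - 2 * (g (fst p) * snd p) + g (fst p) * g (fst p) \<partial>\<mu>)"
    unfolding noise_var_def
    by (rule Bochner_Integration.integral_cong) (auto simp: power2_eq_square algebra_simps)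
  also have "\<dots> = (\<integral>p. snd p * snd p \<partial>\<mu>) - (\<integral>p. g (fst p) * g (fst p) \<partial>\<mu>)"
    using integrable orthogonality by simp
  also have "\<dots> = (\<integral>p. (snd p)\<^sup>2 - (g (fst p))\<^sup>2 \<partial>\<mu>)"
    using integrable by (simp add: power2_eq_square)
  finally show ?thesis .
qed

end

lemma (in prob_space) sample_moment_gap_lower_tail:
  fixes \<mu> :: "('d::euclidean_space \<times> real) measure"
    and X :: "nat \<Rightarrow> 'a \<Rightarrow> 'd" and Y :: "nat \<Rightarrow> 'a \<Rightarrow> real"
  assumes "prob_space \<mu>" and "sets \<mu> = sets borel"
    and ident: "\<And>i. i < n \<Longrightarrow> distr M borel (\<lambda>\<omega>. (X i \<omega>, Y i \<omega>)) = \<mu>"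
    and indep: "indep_vars (\<lambda>_. borel) (\<lambda>i \<omega>. (X i \<omega>, Y i \<omega>)) {..<n}"
    and bounded: "\<And>i \<omega>. i < n \<Longrightarrow> \<omega> \<in> space M \<Longrightarrow> \<bar>Y i \<omega>\<bar> \<le> 1"
    and reg: "regression_fun \<mu> g"
    and "t \<ge> 0"
  shows "prob {\<omega> \<in> space M. (\<Sum>i<n. (Y i \<omega>)\<^sup>2 - (g (X i \<omega>))\<^sup>2) \<le> real n * noise_var \<mu> g - real n * t}
    \<le> exp (- (real n * t\<^sup>2 / 2))"
proof (cases "n = 0")
  case False
  then have "n > 0" by simp
  have [measurable]: "g \<in> borel_measurable borel"
    using reg by (rule regression_fun_borel_measurable)
  have [measurable]: "snd \<in> (borel :: ('d \<times> real) measure) \<rightarrow>\<^sub>M borel"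
    unfolding borel_prod[symmetric] by measurable
  have "(\<lambda>p::'d \<times> real. (snd p)\<^sup>2 - (g (fst p))\<^sup>2) \<in> borel_measurable borel"
    unfolding borel_prod[symmetric] by measurable
  note Hoeffding = Hoeffding_lower_tail_iid[OF indep ident this]
  have "(\<lambda>\<omega>. (X 0 \<omega>, Y 0 \<omega>)) \<in> M \<rightarrow>\<^sub>M borel"
    using indep \<open>n > 0\<close> unfolding indep_vars_def by auto
  then have "AE p in \<mu>. \<bar>snd p\<bar> \<le> 1"
    unfolding ident[OF \<open>n > 0\<close>, symmetric] using bounded[OF \<open>n > 0\<close>]
    by (subst AE_distr_iff) auto
  note \<mu>_facts = AE_diff_squares_regression_in_interval[OF assms(1,2) reg this]
    noise_var_eq_integral_diff_squares[OF assms(1,2) reg this]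
  from Hoeffding[of "- 1" 1 t] \<mu>_facts \<open>n > 0\<close> \<open>t \<ge> 0\<close> show ?thesis
    by (simp add: power2_eq_square mult_ac)
qed simp

theorem mainTheorem2:
  fixes M :: "'a measure" and \<mu> :: "('d::euclidean_space \<times> real) measure"
    and X :: "nat \<Rightarrow> 'a \<Rightarrow> 'd" and Y :: "nat \<Rightarrow> 'a \<Rightarrow> real"
    and n :: nat and g :: "'d \<Rightarrow> real" and \<F> :: "('d \<Rightarrow> real) set" and \<epsilon> :: real
  assumes "prob_space M"
    and "prob_space \<mu>" and "sets \<mu> = sets borel"
    and meas: "\<And>i. i < n \<Longrightarrow> (\<lambda>\<omega>. (X i \<omega>, Y i \<omega>)) \<in> M \<rightarrow>\<^sub>M borel"
    and ident: "\<And>i. i < n \<Longrightarrow> distr M borel (\<lambda>\<omega>. (X i \<omega>, Y i \<omega>)) = \<mu>"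
    and indep: "prob_space.indep_vars M (\<lambda>_. borel) (\<lambda>i \<omega>. (X i \<omega>, Y i \<omega>)) {..<n}"
    and bounded: "\<And>i \<omega>. i < n \<Longrightarrow> \<omega> \<in> space M \<Longrightarrow> \<bar>Y i \<omega>\<bar> \<le> 1"
    and reg: "regression_fun \<mu> g"
    and ev1: "{\<omega> \<in> space M. \<exists>f\<in>\<F>. (1 / real n) * (\<Sum>i<n. (Y i \<omega> - f (X i \<omega>))\<^sup>2)
                 \<le> noise_var \<mu> g - \<epsilon>} \<in> sets M"
    and ev2: "{\<omega> \<in> space M. \<exists>f\<in>\<F>. (1 / real n) * (\<Sum>i<n. f (X i \<omega>) * (Y i \<omega> - g (X i \<omega>)))
                 \<ge> \<epsilon> / 4} \<in> sets M"
    and "\<epsilon> > 0"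
  shows "measure M {\<omega> \<in> space M. \<exists>f\<in>\<F>. (1 / real n) * (\<Sum>i<n. (Y i \<omega> - f (X i \<omega>))\<^sup>2)
                 \<le> noise_var \<mu> g - \<epsilon>}
         \<le> 2 * exp (- (real n * \<epsilon>\<^sup>2 / 8 ^ 3))
           + measure M {\<omega> \<in> space M. \<exists>f\<in>\<F>. (1 / real n) * (\<Sum>i<n. f (X i \<omega>) * (Y i \<omega> - g (X i \<omega>)))
                 \<ge> \<epsilon> / 4}"
proof -
  interpret M: prob_space M by fact
  let ?A = "{\<omega> \<in> space M. \<exists>f\<in>\<F>. (1 / real n) * (\<Sum>i<n. (Y i \<omega> - f (X i \<omega>))\<^sup>2)
                 \<le> noise_var \<mu> g - \<epsilon>}"
  let ?B = "{\<omega> \<in> space M. \<exists>f\<in>\<F>. (1 / real n) * (\<Sum>i<n. f (X i \<omega>) * (Y i \<omega> - g (X i \<omega>)))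
                 \<ge> \<epsilon> / 4}"
  define C where "C = {\<omega> \<in> space M. (\<Sum>i<n. (Y i \<omega>)\<^sup>2 - (g (X i \<omega>))\<^sup>2)
    \<le> real n * noise_var \<mu> g - real n * (\<epsilon> / 2)}"
  have [measurable]: "g \<in> borel_measurable borel"
    using reg by (rule regression_fun_borel_measurable)
  have X: "X i \<in> borel_measurable M" and Y: "Y i \<in> borel_measurable M" if "i < n" for i
    using meas[OF that] unfolding borel_prod[symmetric] measurable_pair_iff by (simp_all add: comp_def)
  have C_sets: "C \<in> sets M"
    unfolding C_def by measurable (auto intro: Y measurable_compose[OF X])
  have "measure M C \<le> exp (- (real n * (\<epsilon> / 2)\<^sup>2 / 2))"
    unfolding C_def using \<open>\<epsilon> > 0\<close>
    by (intro M.sample_moment_gap_lower_tail[OF assms(2,3) ident indep bounded reg]) auto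
  also have "\<dots> = exp (- (real n * \<epsilon>\<^sup>2 / 8))"
    by (simp add: power2_eq_square)
  also have "\<dots> \<le> exp (- (real n * \<epsilon>\<^sup>2 / 8 ^ 3))"
    by (simp add: divide_left_mono)
  also have "\<dots> \<le> 2 * exp (- (real n * \<epsilon>\<^sup>2 / 8 ^ 3))"
    by simp
  finally have "measure M C \<le> 2 * exp (- (real n * \<epsilon>\<^sup>2 / 8 ^ 3))" .
  moreover have "?A \<subseteq> ?B \<union> C"
    unfolding C_def by (rule low_empirical_risk_event_subset)
  then have "measure M ?A \<le> measure M ?B + measure M C"
    using measure_Un_le[OF ev2 C_sets] M.finite_measure_mono[of ?A "?B \<union> C"] ev2 C_sets
    by fastforce
  ultimately show ?thesis
    by linarith
qed

end
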